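(* There exists an invertible $23\times23$ binary matrix such that the corresponding linear kernel has partial distance sequence $(1,2,2,2,2,2,4,4,4,4,4,4,8,8,8,8,8,8,8,12,12,12,16)$. Consequently $E_{23}\ge\frac1{23}\sum_{i=0}^{22}\log_{23}D_{min}^{(i)}\approx0.50705$.
   Context: A kernel of dimension $\ell$ is a bijection $g:\{0,1\}^\ell\to\{0,1\}^\ell$; a linear kernel is $g({\bf u})={\bf u}G$ over $\mathbb{F}_2$ for an invertible $\ell\times\ell$ binary matrix $G$. ${\bf a}\bullet{\bf b}$ denotes concatenation, $d_H$ Hamming distance. Partial distances: $D_{min}^{(i)}=\min\{d_H(g({\bf w}\bullet 0\bullet{\bf u}),g({\bf w}\bullet 1\bullet {\bf v})) : {\bf w}\in\{0,1\}^i,\ {\bf u},{\bf v}\in\{0,1\}^{\ell-i-1}\}$, $i=0,\dots,\ell-1$; exponent $E(g)=\frac1\ell\sum_{i}\log_\ell D_{min}^{(i)}$; $E_\ell=\max_g E(g)$ over all kernels of dimension $\ell$. *)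

theory Defs
  imports Complex_Main
begin

text \<open>Binary vectors of length l are bool lists (True = 1); arithmetic over GF(2)
  is expressed via parity (odd card) of sums.\<close>

definition vecs :: "nat \<Rightarrow> bool list set" where
  "vecs l = {u. length u = l}"

definition hamming :: "bool list \<Rightarrow> bool list \<Rightarrow> nat" where
  "hamming a b = card {i. i < length a \<and> a ! i \<noteq> b ! i}"

definition mat_mult_F2 :: "nat \<Rightarrow> (nat \<Rightarrow> nat \<Rightarrow> bool) \<Rightarrow> (nat \<Rightarrow> nat \<Rightarrow> bool) \<Rightarrow> nat \<Rightarrow> nat \<Rightarrow> bool" where
  "mat_mult_F2 l A B i j = odd (card {k. k < l \<and> A i k \<and> B k j})"

definition invertible_F2 :: "nat \<Rightarrow> (nat \<Rightarrow> nat \<Rightarrow> bool) \<Rightarrow> bool" where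
  "invertible_F2 l G \<longleftrightarrow> (\<exists>H. \<forall>i<l. \<forall>j<l.
      mat_mult_F2 l G H i j = (i = j) \<and> mat_mult_F2 l H G i j = (i = j))"

definition lin_kernel :: "nat \<Rightarrow> (nat \<Rightarrow> nat \<Rightarrow> bool) \<Rightarrow> bool list \<Rightarrow> bool list" where
  "lin_kernel l G u = map (\<lambda>j. odd (card {i. i < l \<and> u ! i \<and> G i j})) [0..<l]"

definition is_kernel :: "nat \<Rightarrow> (bool list \<Rightarrow> bool list) \<Rightarrow> bool" where
  "is_kernel l g \<longleftrightarrow> bij_betw g (vecs l) (vecs l)"

definition partial_dist :: "nat \<Rightarrow> (bool list \<Rightarrow> bool list) \<Rightarrow> nat \<Rightarrow> nat" where
  "partial_dist l g i = Min {hamming (g (w @ [False] @ u)) (g (w @ [True] @ v)) | w u v.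
      w \<in> vecs i \<and> u \<in> vecs (l - i - 1) \<and> v \<in> vecs (l - i - 1)}"

definition kernel_exponent :: "nat \<Rightarrow> (bool list \<Rightarrow> bool list) \<Rightarrow> real" where
  "kernel_exponent l g = (1 / real l) * (\<Sum>i<l. log (real l) (real (partial_dist l g i)))"

definition E_max :: "nat \<Rightarrow> real" where
  "E_max l = Max {kernel_exponent l g | g. is_kernel l g}"

definition pd_seq23 :: "nat list" where
  "pd_seq23 = [1,2,2,2,2,2,4,4,4,4,4,4,8,8,8,8,8,8,8,12,12,12,16]"

end

theory Submission
  imports Defs "HOL-Library.FuncSet"
begin

(* Binary vectors are bool lists; for a matrix given by its list of rows A, the linear kernel
   maps u to the GF(2)-linear combination of the rows selected by u.  For such a kernel the
   partial distance D_i is the minimum weight of  A!i + (combination of rows i+1,...,l-1),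
   i.e. the minimum weight of the coset of row i modulo the code spanned by the later rows.
   Hence D_i = d follows from (a) row i itself has weight d and (b) every combination of the
   rows i, i+1, ... in which some row occurs has weight at least d.
   For the explicit 23 x 23 matrix G23, (b) is obtained blockwise for the tails starting at
   rows 0, 1, 6, 12, 19, 22: linear independence (from an explicit inverse), even weights,
   a parity-check matrix with distinct columns, and exhaustive enumeration of the 2^11, 2^4,
   2^1 combinations of the last rows.
   Finally an invertible linear kernel is a kernel, and the kernel exponent of any kernel is
   bounded by E_max, since the set of exponents of kernels of dimension l is finite. *)

section \<open>Vectors over GF(2)\<close>

definition xor_vec :: "bool list \<Rightarrow> bool list \<Rightarrow> bool list" where
  "xor_vec a b = map2 (\<noteq>) a b"

definition weight :: "bool list \<Rightarrow> nat" where
  "weight c = length (filter id c)"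

fun lin_comb :: "nat \<Rightarrow> bool list list \<Rightarrow> bool list \<Rightarrow> bool list" where
  "lin_comb m (r # rs) (b # bs) = (if b then xor_vec r (lin_comb m rs bs) else lin_comb m rs bs)"
| "lin_comb m _ _ = replicate m False"

fun dot_F2 :: "bool list \<Rightarrow> bool list \<Rightarrow> bool" where
  "dot_F2 (a # as) (b # bs) = ((a \<and> b) \<noteq> dot_F2 as bs)"
| "dot_F2 _ _ = False"

lemma xor_vec_length [simp]: "length (xor_vec a b) = min (length a) (length b)"
  by (simp add: xor_vec_def)

lemma xor_vec_nth [simp]:
  "j < length a \<Longrightarrow> j < length b \<Longrightarrow> xor_vec a b ! j = (a ! j \<noteq> b ! j)"
  by (simp add: xor_vec_def)

lemma xor_vec_zero_left [simp]: "length a = m \<Longrightarrow> xor_vec (replicate m False) a = a"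
  by (rule nth_equalityI) auto

lemma xor_vec_zero_right [simp]: "length a = m \<Longrightarrow> xor_vec a (replicate m False) = a"
  by (rule nth_equalityI) auto

lemma lin_comb_length [simp]: "\<forall>r\<in>set rs. length r = m \<Longrightarrow> length (lin_comb m rs u) = m"
  by (induction m rs u rule: lin_comb.induct) auto

lemma lin_comb_zero: "lin_comb m rs (replicate k False) = replicate m False"
proof (induction rs arbitrary: k)
  case (Cons r rs) then show ?case by (cases k) auto
qed simp

lemma lin_comb_zero_prefix: "lin_comb m rs (replicate i False @ z) = lin_comb m (drop i rs) z"
proof (induction i arbitrary: rs)
  case (Suc i) then show ?case by (cases rs) auto
qed simp

lemma lin_comb_xor:
  assumes "length x = length rs" "length y = length rs" "\<forall>r\<in>set rs. length r = m"
  shows "lin_comb m rs (xor_vec x y) = xor_vec (lin_comb m rs x) (lin_comb m rs y)"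
  using assms
proof (induction rs arbitrary: x y)
  case (Cons r rs)
  then obtain a x' b y' where x: "x = a # x'" and y: "y = b # y'"
    by (metis length_Suc_conv)
  have "xor_vec x y = (a \<noteq> b) # xor_vec x' y'" by (simp add: x y xor_vec_def)
  then show ?case using Cons by (auto simp: x y intro!: nth_equalityI)
qed simp

lemma lin_comb_comp:
  assumes "length u = length B" "\<forall>r\<in>set B. length r = length A" "\<forall>r\<in>set A. length r = m"
  shows "lin_comb m A (lin_comb (length A) B u) = lin_comb m (map (lin_comb m A) B) u"
  using assms
proof (induction B arbitrary: u)
  case Nil then show ?case by (simp add: lin_comb_zero)
next
  case (Cons r rs)
  then obtain b u' where "u = b # u'" by (metis length_Suc_conv)
  with Cons show ?case by (auto simp: lin_comb_xor)
qed

lemma card_less_Suc_split: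
  "card {k. k < Suc n \<and> P k} =
     (if P 0 then Suc (card {k. k < n \<and> P (Suc k)}) else card {k. k < n \<and> P (Suc k)})"
proof -
  have "{k. k < Suc n \<and> P k} = (if P 0 then {0} else {}) \<union> Suc ` {k. k < n \<and> P (Suc k)}"
    by (auto simp: less_Suc_eq_0_disj)
  then show ?thesis by (auto simp: card_insert_if card_image)
qed

lemma lin_comb_nth:
  "length rs = length u \<Longrightarrow> \<forall>r\<in>set rs. length r = m \<Longrightarrow> j < m \<Longrightarrow>
   lin_comb m rs u ! j = odd (card {k. k < length u \<and> u ! k \<and> rs ! k ! j})"
proof (induction m rs u rule: lin_comb.induct)
  case (1 m r rs b bs)
  then show ?case by (simp add: card_less_Suc_split del: One_nat_def)
qed auto

lemma dot_F2_card:
  "length h = length c \<Longrightarrow> dot_F2 h c = odd (card {k. k < length c \<and> h ! k \<and> c ! k})"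
proof (induction h c rule: dot_F2.induct)
  case (1 a as b bs)
  then show ?case by (cases a; cases b) (simp_all add: card_less_Suc_split del: One_nat_def)
qed auto

lemma dot_F2_xor: "length a = length b \<Longrightarrow> dot_F2 h (xor_vec a b) = (dot_F2 h a \<noteq> dot_F2 h b)"
proof (induction h arbitrary: a b)
  case (Cons x h)
  then show ?case
    by (cases a; cases b) (auto simp: xor_vec_def)
qed simp

lemma dot_F2_zero: "\<not> dot_F2 h (replicate m False)"
proof (induction h arbitrary: m)
  case (Cons a h) then show ?case by (cases m) auto
qed simp

lemma dot_F2_lin_comb:
  "\<forall>r\<in>set rs. length r = m \<and> \<not> dot_F2 h r \<Longrightarrow> \<not> dot_F2 h (lin_comb m rs u)"
  by (induction m rs u rule: lin_comb.induct) (auto simp: dot_F2_xor dot_F2_zero)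

lemma weight_card: "weight c = card {k. k < length c \<and> c ! k}"
  unfolding weight_def by (simp add: length_filter_conv_card)

lemma weight_pos_iff: "1 \<le> weight c \<longleftrightarrow> True \<in> set c"
  unfolding weight_def by (auto simp: Suc_le_eq filter_empty_conv length_greater_0_conv)

lemma hamming_weight: "length a = length b \<Longrightarrow> hamming a b = weight (xor_vec a b)"
  unfolding hamming_def weight_card by (intro arg_cong[where f=card]) auto


section \<open>Linear kernels given by rows\<close>

text \<open>A square binary matrix is represented by the list of its rows; mat_of_rows turns it
  into the entry function used in Defs, and unit_rows l is the identity matrix.\<close>

definition square :: "nat \<Rightarrow> bool list list \<Rightarrow> bool" where
  "square l A \<longleftrightarrow> length A = l \<and> (\<forall>r\<in>set A. length r = l)"

definition mat_of_rows :: "bool list list \<Rightarrow> nat \<Rightarrow> nat \<Rightarrow> bool" where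
  "mat_of_rows A i j = A ! i ! j"

definition unit_rows :: "nat \<Rightarrow> bool list list" where
  "unit_rows n = map (\<lambda>i. map (\<lambda>j. i = j) [0..<n]) [0..<n]"

lemma lin_kernel_lin_comb:
  assumes "square l A" "length u = l"
  shows "lin_kernel l (mat_of_rows A) u = lin_comb l A u"
  using assms by (intro nth_equalityI) (auto simp: square_def lin_kernel_def lin_comb_nth mat_of_rows_def)

lemma lin_comb_unit_rows:
  assumes "length u = n"
  shows "lin_comb n (unit_rows n) u = u"
proof (rule nth_equalityI)
  fix j assume "j < length (lin_comb n (unit_rows n) u)"
  then have j: "j < n" by (simp add: unit_rows_def)
  have "lin_comb n (unit_rows n) u ! j = odd (card {k. k < n \<and> u ! k \<and> unit_rows n ! k ! j})"
    using assms j by (subst lin_comb_nth) (auto simp: unit_rows_def)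
  also have "{k. k < n \<and> u ! k \<and> unit_rows n ! k ! j} = (if u ! j then {j} else {})"
    using j by (auto simp: unit_rows_def)
  finally show "lin_comb n (unit_rows n) u ! j = u ! j" by simp
qed (simp add: assms unit_rows_def)

text \<open>If B is a right inverse of A (A B = 1), then B undoes the linear map u \<mapsto> u A.\<close>
lemma lin_comb_inverse:
  assumes "square l A" "square l B" "map (lin_comb l B) A = unit_rows l" "length u = l"
  shows "lin_comb l B (lin_comb l A u) = u"
  using assms lin_comb_comp[of u A B l] by (simp add: square_def lin_comb_unit_rows)

lemma mat_mult_F2_lin_comb:
  assumes "square l A" "square l B" "i < l" "j < l"
  shows "mat_mult_F2 l (mat_of_rows A) (mat_of_rows B) i j = lin_comb l B (A ! i) ! j"
  using assms by (simp add: square_def lin_comb_nth mat_mult_F2_def mat_of_rows_def)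

lemma invertible_mat_of_rows:
  assumes A: "square l A" and B: "square l B"
    and AB: "map (lin_comb l B) A = unit_rows l" and BA: "map (lin_comb l A) B = unit_rows l"
  shows "invertible_F2 l (mat_of_rows A)"
  unfolding invertible_F2_def
proof (intro exI[of _ "mat_of_rows B"] allI impI conjI)
  fix i j assume ij: "i < l" "j < l"
  have "lin_comb l B (A ! i) = unit_rows l ! i" "lin_comb l A (B ! i) = unit_rows l ! i"
    using ij A B by (metis AB BA nth_map square_def)+
  then show "mat_mult_F2 l (mat_of_rows A) (mat_of_rows B) i j = (i = j)"
    "mat_mult_F2 l (mat_of_rows B) (mat_of_rows A) i j = (i = j)"
    using ij A B by (simp_all add: mat_mult_F2_lin_comb unit_rows_def)
qed

lemma is_kernel_lin_kernel:
  assumes A: "square l A" and B: "square l B"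
    and AB: "map (lin_comb l B) A = unit_rows l" and BA: "map (lin_comb l A) B = unit_rows l"
  shows "is_kernel l (lin_kernel l (mat_of_rows A))"
  unfolding is_kernel_def
proof (rule bij_betw_byWitness[where f' = "lin_comb l B"])
  have len: "\<forall>r\<in>set A. length r = l" "\<forall>r\<in>set B. length r = l"
    using A B by (auto simp: square_def)
  show "\<forall>u\<in>vecs l. lin_comb l B (lin_kernel l (mat_of_rows A) u) = u"
    using A B AB by (simp add: vecs_def lin_kernel_lin_comb lin_comb_inverse)
  show "\<forall>v\<in>vecs l. lin_kernel l (mat_of_rows A) (lin_comb l B v) = v"
    using A B BA len by (simp add: vecs_def lin_kernel_lin_comb lin_comb_inverse)
  show "lin_kernel l (mat_of_rows A) ` vecs l \<subseteq> vecs l"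
    by (auto simp: vecs_def lin_kernel_def)
  show "lin_comb l B ` vecs l \<subseteq> vecs l"
    using len by (auto simp: vecs_def)
qed

lemma finite_vecs: "finite (vecs n)"
  using finite_lists_length_eq[of "UNIV :: bool set" n] by (simp add: vecs_def)

text \<open>Partial distances of a linear kernel: D_i is the minimum weight of the coset
  A!i + span(A!(i+1), ..., A!(l-1)), since g(w 0 u) + g(w 1 v) = (0...0 1 (u+v)) A.\<close>
lemma partial_dist_lin_kernel:
  assumes A: "square l A" and i: "i < l"
  shows "partial_dist l (lin_kernel l (mat_of_rows A)) i =
         Min ((\<lambda>z. weight (lin_comb l (drop i A) (True # z))) ` vecs (l - i - 1))"
proof -
  let ?g = "lin_kernel l (mat_of_rows A)"
  have len: "\<forall>r\<in>set A. length r = l" using A by (simp add: square_def)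
  have coset: "hamming (?g (w @ [False] @ u)) (?g (w @ [True] @ v)) =
               weight (lin_comb l (drop i A) (True # xor_vec u v))"
    if w: "length w = i" and u: "length u = l - i - 1" and v: "length v = l - i - 1" for w u v
  proof -
    have l: "length (w @ [False] @ u) = l" "length (w @ [True] @ v) = l" using w u v i by auto
    have "hamming (?g (w @ [False] @ u)) (?g (w @ [True] @ v)) =
          weight (xor_vec (lin_comb l A (w @ [False] @ u)) (lin_comb l A (w @ [True] @ v)))"
      using l A len by (simp add: lin_kernel_lin_comb hamming_weight)
    also have "\<dots> = weight (lin_comb l A (xor_vec (w @ [False] @ u) (w @ [True] @ v)))"
      using l A len by (simp add: lin_comb_xor square_def)
    also have "xor_vec (w @ [False] @ u) (w @ [True] @ v) = replicate i False @ True # xor_vec u v"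
      using w u v by (intro nth_equalityI) (auto simp: nth_append nth_Cons')
    finally show ?thesis by (simp add: lin_comb_zero_prefix)
  qed
  have "{hamming (?g (w @ [False] @ u)) (?g (w @ [True] @ v)) | w u v.
          w \<in> vecs i \<and> u \<in> vecs (l - i - 1) \<and> v \<in> vecs (l - i - 1)} =
        (\<lambda>z. weight (lin_comb l (drop i A) (True # z))) ` vecs (l - i - 1)"
  proof (intro equalityI subsetI)
    fix x assume "x \<in> {hamming (?g (w @ [False] @ u)) (?g (w @ [True] @ v)) | w u v.
          w \<in> vecs i \<and> u \<in> vecs (l - i - 1) \<and> v \<in> vecs (l - i - 1)}"
    then obtain w u v where x: "x = hamming (?g (w @ [False] @ u)) (?g (w @ [True] @ v))"
      and wuv: "length w = i" "length u = l - i - 1" "length v = l - i - 1"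
      by (auto simp: vecs_def)
    then have "x = weight (lin_comb l (drop i A) (True # xor_vec u v))"
      "xor_vec u v \<in> vecs (l - i - 1)"
      using coset[OF wuv] by (simp_all add: vecs_def)
    then show "x \<in> (\<lambda>z. weight (lin_comb l (drop i A) (True # z))) ` vecs (l - i - 1)"
      by blast
  next
    fix x assume "x \<in> (\<lambda>z. weight (lin_comb l (drop i A) (True # z))) ` vecs (l - i - 1)"
    then obtain z where z: "z \<in> vecs (l - i - 1)" "x = weight (lin_comb l (drop i A) (True # z))"
      by blast
    let ?w = "replicate i False" and ?u = "replicate (l - i - 1) False"
    have "hamming (?g (?w @ [False] @ ?u)) (?g (?w @ [True] @ z)) =
          weight (lin_comb l (drop i A) (True # xor_vec ?u z))"
      using z by (intro coset) (auto simp: vecs_def)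
    then have "x = hamming (?g (?w @ [False] @ ?u)) (?g (?w @ [True] @ z))"
      using z by (simp add: vecs_def)
    then show "x \<in> {hamming (?g (w @ [False] @ u)) (?g (w @ [True] @ v)) | w u v.
          w \<in> vecs i \<and> u \<in> vecs (l - i - 1) \<and> v \<in> vecs (l - i - 1)}"
      using z(1) by (fastforce simp: vecs_def)
  qed
  then show ?thesis unfolding partial_dist_def by simp
qed

lemma partial_dist_lin_kernel_eqI:
  assumes A: "square l A" and i: "i < l"
    and lower: "\<And>z. length z = l - i - 1 \<Longrightarrow> d \<le> weight (lin_comb l (drop i A) (True # z))"
    and row: "weight (A ! i) = d"
  shows "partial_dist l (lin_kernel l (mat_of_rows A)) i = d"
  unfolding partial_dist_lin_kernel[OF A i]
proof (rule Min_eqI)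
  let ?z = "replicate (l - i - 1) False"
  have "drop i A = A ! i # drop (Suc i) A" using A i by (simp add: square_def Cons_nth_drop_Suc)
  moreover have "length (A ! i) = l" using A i by (simp add: square_def)
  ultimately have "lin_comb l (drop i A) (True # ?z) = A ! i"
    by (simp add: lin_comb_zero)
  then show "d \<in> (\<lambda>z. weight (lin_comb l (drop i A) (True # z))) ` vecs (l - i - 1)"
    using row by (intro image_eqI[where x = ?z]) (auto simp: vecs_def)
  show "finite ((\<lambda>z. weight (lin_comb l (drop i A) (True # z))) ` vecs (l - i - 1))"
    by (intro finite_imageI finite_vecs)
qed (auto simp: vecs_def lower)


section \<open>Lower bounds on weights of codewords\<close>

definition dist_ge :: "nat \<Rightarrow> nat \<Rightarrow> bool list list \<Rightarrow> bool" where
  "dist_ge m d rs \<longleftrightarrow> (\<forall>y. length y = length rs \<and> True \<in> set y \<longrightarrow> d \<le> weight (lin_comb m rs y))"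

lemma dist_ge_coset:
  assumes "dist_ge m d (drop s A)" "s \<le> i" "i < length A" "length z = length A - i - 1"
  shows "d \<le> weight (lin_comb m (drop i A) (True # z))"
proof -
  have "lin_comb m (drop i A) (True # z) = lin_comb m (drop s A) (replicate (i - s) False @ True # z)"
    using assms(2) by (simp add: lin_comb_zero_prefix)
  then show ?thesis using assms by (simp add: dist_ge_def)
qed

text \<open>The rows of an invertible matrix are linearly independent, so every tail has
  distance at least 1.\<close>
lemma dist_ge_1_invertible:
  assumes A: "square l A" and B: "square l B" and AB: "map (lin_comb l B) A = unit_rows l"
  shows "dist_ge l 1 (drop s A)"
  unfolding dist_ge_def weight_pos_iff
proof (intro allI impI)
  fix y assume y: "length y = length (drop s A) \<and> True \<in> set y"
  let ?u = "replicate s False @ y"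
  have s: "s \<le> l" using y A by (cases "s \<le> l") (auto simp: square_def)
  have c: "lin_comb l (drop s A) y = lin_comb l A ?u" by (simp add: lin_comb_zero_prefix)
  show "True \<in> set (lin_comb l (drop s A) y)"
  proof (rule ccontr)
    assume "True \<notin> set (lin_comb l (drop s A) y)"
    then have "lin_comb l A ?u = replicate l False"
      using A c by (intro nth_equalityI) (auto simp: square_def in_set_conv_nth)
    then have "?u = replicate l False"
      using lin_comb_inverse[OF A B AB, of ?u] y s A by (simp add: square_def lin_comb_zero)
    moreover have "True \<in> set ?u" using y by simp
    ultimately show False by (simp add: set_replicate_conv_if split: if_splits)
  qed
qed

lemma dot_F2_ones: "dot_F2 (replicate (length c) True) c = odd (weight c)"
proof -
  have "{k. k < length c \<and> replicate (length c) True ! k \<and> c ! k} = {k. k < length c \<and> c ! k}"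
    by auto
  then show ?thesis by (simp add: dot_F2_card weight_card)
qed

lemma weight_ge_2:
  assumes "True \<in> set c" "\<not> dot_F2 (replicate (length c) True) c"
  shows "2 \<le> weight c"
proof (rule ccontr)
  assume "\<not> 2 \<le> weight c"
  then have "weight c = 1" using assms(1) weight_pos_iff[of c] by linarith
  then show False using assms(2) dot_F2_ones[of c] by simp
qed

text \<open>If moreover c lies in the kernel of a parity-check matrix H with pairwise distinct
  columns, c cannot have weight 2, so its weight is at least 4.\<close>
lemma weight_ge_4:
  assumes c: "length c = n" "True \<in> set c"
    and H: "\<forall>h\<in>set H. length h = n \<and> \<not> dot_F2 h c" "replicate n True \<in> set H"
    and cols: "\<forall>a<n. \<forall>b<n. a \<noteq> b \<longrightarrow> (\<exists>h\<in>set H. h ! a \<noteq> h ! b)"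
  shows "4 \<le> weight c"
proof -
  let ?S = "{k. k < n \<and> c ! k}"
  have even: "\<not> dot_F2 (replicate (length c) True) c" using c(1) H by blast
  have "card ?S \<noteq> 2"
  proof
    assume "card ?S = 2"
    then obtain a b where ab: "?S = {a, b}" "a \<noteq> b" by (meson card_2_iff)
    then have "a < n" "b < n" by auto
    then obtain h where h: "h \<in> set H" "h ! a \<noteq> h ! b" using cols ab(2) by blast
    have "{k. k < length c \<and> h ! k \<and> c ! k} = {k \<in> ?S. h ! k}" using c(1) by auto
    also have "\<dots> = (if h ! a then {a} else {b})" using ab h(2) by auto
    finally have "dot_F2 h c" using H h(1) c(1) by (simp add: dot_F2_card)
    then show False using H h(1) by blast
  qed
  moreover have "weight c = card ?S" using c(1) by (simp add: weight_card)
  moreover have "weight c \<noteq> 3" using even dot_F2_ones[of c] by fastforce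
  ultimately show ?thesis using weight_ge_2[OF c(2) even] by linarith
qed

lemma dist_ge_2_even:
  assumes dist: "dist_ge m 1 rs"
    and even: "\<forall>r\<in>set rs. length r = m \<and> \<not> dot_F2 (replicate m True) r"
  shows "dist_ge m 2 rs"
  unfolding dist_ge_def
proof (intro allI impI)
  fix y assume "length y = length rs \<and> True \<in> set y"
  then have "True \<in> set (lin_comb m rs y)"
    using dist by (simp add: dist_ge_def weight_pos_iff[symmetric])
  moreover have "\<not> dot_F2 (replicate m True) (lin_comb m rs y)"
    using even by (intro dot_F2_lin_comb) auto
  ultimately show "2 \<le> weight (lin_comb m rs y)"
    using even by (intro weight_ge_2) auto
qed

lemma dist_ge_4_parity_check:
  assumes dist: "dist_ge m 1 rs" and rows: "\<forall>r\<in>set rs. length r = m \<and> (\<forall>h\<in>set H. \<not> dot_F2 h r)"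
    and H: "\<forall>h\<in>set H. length h = m" "replicate m True \<in> set H"
    and cols: "\<forall>a<m. \<forall>b<m. a \<noteq> b \<longrightarrow> (\<exists>h\<in>set H. h ! a \<noteq> h ! b)"
  shows "dist_ge m 4 rs"
  unfolding dist_ge_def
proof (intro allI impI)
  fix y assume "length y = length rs \<and> True \<in> set y"
  then have "True \<in> set (lin_comb m rs y)"
    using dist by (simp add: dist_ge_def weight_pos_iff[symmetric])
  moreover have "\<forall>h\<in>set H. length h = m \<and> \<not> dot_F2 h (lin_comb m rs y)"
    using rows H(1) by (auto intro!: dot_F2_lin_comb)
  ultimately show "4 \<le> weight (lin_comb m rs y)"
    using rows H(2) cols by (intro weight_ge_4) auto
qed

text \<open>Exhaustive check: all_sums_heavy d rs acc nonempty states that acc plus any sum of a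
  subset of rs (nonempty unless nonempty holds) has weight at least d.\<close>
fun all_sums_heavy :: "nat \<Rightarrow> bool list list \<Rightarrow> bool list \<Rightarrow> bool \<Rightarrow> bool" where
  "all_sums_heavy d [] acc nonempty = (nonempty \<longrightarrow> d \<le> weight acc)"
| "all_sums_heavy d (r # rs) acc nonempty =
     (all_sums_heavy d rs acc nonempty \<and> all_sums_heavy d rs (xor_vec r acc) True)"

lemma all_sums_heavy_sound:
  assumes "all_sums_heavy d rs acc nonempty" "length y = length rs" "\<forall>r\<in>set rs. length r = m"
    "length acc = m" "nonempty \<or> True \<in> set y"
  shows "d \<le> weight (xor_vec (lin_comb m rs y) acc)"
  using assms
proof (induction rs arbitrary: y acc nonempty)
  case (Cons r rs)
  then obtain b y' where y: "y = b # y'" by (metis length_Suc_conv)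
  show ?case
  proof (cases b)
    case True
    have "xor_vec (xor_vec r (lin_comb m rs y')) acc = xor_vec (lin_comb m rs y') (xor_vec r acc)"
      using Cons.prems by (auto intro!: nth_equalityI)
    then show ?thesis using Cons.IH[of "xor_vec r acc" True y'] Cons.prems True y by auto
  next
    case False
    then show ?thesis using Cons.IH[of acc nonempty y'] Cons.prems y by auto
  qed
qed simp

lemma dist_ge_by_enumeration:
  "all_sums_heavy d rs (replicate m False) False \<Longrightarrow> \<forall>r\<in>set rs. length r = m \<Longrightarrow> dist_ge m d rs"
  using all_sums_heavy_sound[of d rs "replicate m False" False _ m] by (auto simp: dist_ge_def)


section \<open>The kernel exponent of a kernel is a lower bound for E_max\<close>

lemma partial_dist_cong:
  assumes i: "i < l" and eq: "\<And>x. x \<in> vecs l \<Longrightarrow> g x = g' x"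
  shows "partial_dist l g i = partial_dist l g' i"
proof -
  have "g (w @ b # u) = g' (w @ b # u)"
    if "w \<in> vecs i" "u \<in> vecs (l - i - 1)" for w u b
    using that i by (intro eq) (auto simp: vecs_def)
  then show ?thesis unfolding partial_dist_def by (simp cong: rev_conj_cong)
qed

lemma kernel_exponent_restrict: "kernel_exponent l (restrict g (vecs l)) = kernel_exponent l g"
proof -
  have "partial_dist l (restrict g (vecs l)) i = partial_dist l g i" if "i < l" for i
    using that by (rule partial_dist_cong) simp
  then show ?thesis unfolding kernel_exponent_def by simp
qed

text \<open>Up to restriction, kernels are elements of the finite set of extensional maps from
  vecs l to vecs l, so only finitely many exponents occur and their maximum E_max l bounds
  each of them.\<close>
lemma kernel_exponent_le_E_max:
  assumes "is_kernel l g"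
  shows "kernel_exponent l g \<le> E_max l"
proof -
  have "{kernel_exponent l g | g. is_kernel l g} \<subseteq> kernel_exponent l ` (vecs l \<rightarrow>\<^sub>E vecs l)"
  proof
    fix x assume "x \<in> {kernel_exponent l g | g. is_kernel l g}"
    then obtain g where x: "x = kernel_exponent l g" and g: "is_kernel l g" by blast
    have "restrict g (vecs l) \<in> vecs l \<rightarrow>\<^sub>E vecs l"
      using g bij_betw_imp_funcset[of g "vecs l" "vecs l"] by (simp add: is_kernel_def)
    then show "x \<in> kernel_exponent l ` (vecs l \<rightarrow>\<^sub>E vecs l)"
      unfolding x by (metis image_eqI kernel_exponent_restrict)
  qed
  then have "finite {kernel_exponent l g | g. is_kernel l g}"
    by (rule finite_subset) (intro finite_imageI finite_PiE finite_vecs)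
  then show ?thesis unfolding E_max_def using assms by (intro Max_ge) auto
qed



section \<open>The 23 x 23 kernel\<close>

text \<open>The rows of the kernel matrix G23, an inverse of it, and a parity-check matrix for
  the code spanned by its last 17 rows.\<close>

definition G23 :: "bool list list" where "G23 = [
  [True,False,False,False,False,False,False,False,False,False,False,False,False,False,False,False,False,False,False,False,False,False,False],
  [False,False,False,False,False,False,False,True,True,False,False,False,False,False,False,False,False,False,False,False,False,False,False],
  [False,True,False,False,False,False,False,False,False,False,False,False,False,False,True,False,False,False,False,False,False,False,False],
  [False,False,True,False,False,True,False,False,False,False,False,False,False,False,False,False,False,False,False,False,False,False,False],
  [False,False,False,False,False,False,False,False,False,False,False,False,False,False,True,False,False,True,False,False,False,False,False],
  [False,False,True,False,False,False,False,False,False,True,False,False,False,False,False,False,False,False,False,False,False,False,False],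
  [False,False,True,False,False,True,False,False,False,False,False,True,True,False,False,False,False,False,False,False,False,False,False],
  [False,True,True,False,False,False,False,True,False,False,False,False,True,False,False,False,False,False,False,False,False,False,False],
  [True,False,False,False,False,True,False,False,False,False,False,False,True,False,False,False,False,False,True,False,False,False,False],
  [False,False,False,False,True,True,True,False,False,False,False,False,False,False,False,False,False,False,False,False,True,False,False],
  [False,False,False,False,False,False,True,False,False,False,False,False,True,False,False,False,True,False,False,False,False,True,False],
  [False,False,False,False,False,False,True,False,True,False,False,False,False,True,False,False,False,False,False,True,False,False,False],
  [False,False,True,False,True,False,False,True,False,False,True,True,False,True,False,False,True,True,False,False,False,False,False],
  [True,False,False,False,False,True,False,False,False,False,False,False,True,True,False,False,True,False,False,False,True,True,True],
  [True,False,False,False,True,False,False,False,False,True,False,False,False,True,False,False,True,True,True,False,False,True,False],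
  [False,False,False,False,True,False,False,True,False,False,False,True,False,False,True,False,False,True,True,False,False,True,True],
  [False,True,True,False,False,False,False,False,False,True,False,True,False,True,False,True,True,False,True,False,False,False,False],
  [False,False,False,False,True,False,False,True,True,True,False,True,False,True,False,True,False,False,False,False,False,True,False],
  [False,True,False,False,False,False,True,True,False,False,True,False,True,True,False,False,False,True,False,True,False,False,False],
  [True,True,False,True,True,True,True,True,False,True,False,False,True,False,False,True,False,False,True,False,False,False,True],
  [True,True,True,True,False,True,True,True,False,False,True,True,False,True,False,False,False,True,False,False,False,True,False],
  [False,False,False,True,False,True,False,True,True,True,True,False,True,True,False,True,True,False,False,False,True,True,False],
  [True,False,True,False,True,True,True,True,True,True,False,True,False,True,True,True,True,False,False,True,False,True,True]]"

definition G23_inv :: "bool list list" where "G23_inv = [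
  [True,False,False,False,False,False,False,False,False,False,False,False,False,False,False,False,False,False,False,False,False,False,False],
  [True,False,True,True,False,True,True,True,False,True,False,True,True,False,True,False,False,True,False,True,False,True,True],
  [True,True,False,False,True,True,True,False,False,True,True,False,True,True,True,False,True,False,True,False,False,False,True],
  [True,False,True,False,False,False,True,False,True,False,True,True,False,False,False,False,False,False,False,True,False,False,True],
  [True,True,False,False,False,False,True,True,True,True,False,True,False,False,False,True,False,False,False,False,True,True,True],
  [True,True,False,True,True,True,True,False,False,True,True,False,True,True,True,False,True,False,True,False,False,False,True],
  [True,False,True,False,False,True,False,False,False,False,True,False,True,False,True,True,True,False,False,True,True,False,False],
  [True,True,True,True,False,False,False,False,False,True,False,False,True,False,False,True,False,False,False,True,False,True,False],
  [True,False,True,True,False,False,False,False,False,True,False,False,True,False,False,True,False,False,False,True,False,True,False],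
  [True,True,False,False,True,False,True,False,False,True,True,False,True,True,True,False,True,False,True,False,False,False,True],
  [True,True,True,False,False,False,False,False,False,True,True,False,True,True,False,True,True,True,False,False,False,False,False],
  [True,False,False,True,True,False,True,False,False,True,True,True,True,True,False,True,True,True,True,False,False,False,False],
  [True,False,False,False,True,False,False,False,False,True,True,True,True,True,False,True,True,True,True,False,False,False,False],
  [True,True,True,False,True,True,False,False,False,False,False,False,False,False,True,False,True,True,False,False,False,False,False],
  [True,False,False,True,False,True,True,True,False,True,False,True,True,False,True,False,False,True,False,True,False,True,True],
  [True,True,True,False,False,True,True,True,False,False,False,False,False,False,False,False,True,False,True,True,True,False,True],
  [True,True,True,True,False,True,False,False,True,False,True,True,False,True,True,False,False,False,False,False,True,True,True],
  [True,False,False,True,True,True,True,True,False,True,False,True,True,False,True,False,False,True,False,True,False,True,True],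
  [True,True,False,True,False,True,True,False,True,False,False,True,False,False,True,True,False,True,False,False,False,False,True],
  [True,True,True,True,True,False,False,False,False,True,True,True,False,False,False,False,False,True,False,False,True,True,False],
  [True,False,True,True,True,False,False,True,True,True,False,True,False,True,False,False,False,False,True,True,False,True,False],
  [True,True,False,True,True,False,False,False,True,True,False,False,False,False,False,False,False,True,True,True,False,True,True],
  [True,False,True,False,True,True,True,True,True,False,True,True,False,True,True,True,True,True,False,False,True,True,True]]"

definition H23 :: "bool list list" where "H23 = [
  [True,True,True,True,True,True,True,True,True,True,True,True,True,True,True,True,True,True,True,True,True,True,True],
  [False,True,True,False,True,False,False,False,True,True,True,True,False,True,True,True,False,True,False,False,True,False,False],
  [False,True,True,True,True,True,True,False,True,True,False,False,False,False,False,False,False,False,True,False,True,True,True],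
  [True,True,True,True,True,False,False,False,False,False,True,True,False,True,True,False,True,False,True,True,True,True,True],
  [True,True,False,False,True,True,False,True,True,False,False,True,False,True,False,False,True,True,False,False,False,True,True],
  [False,True,True,True,False,False,False,False,False,False,True,True,False,False,False,False,True,False,False,False,False,True,False]]"

lemma G23_square: "square 23 G23" "square 23 G23_inv"
  by code_simp+

lemma G23_inverse:
  "map (lin_comb 23 G23_inv) G23 = unit_rows 23" "map (lin_comb 23 G23) G23_inv = unit_rows 23"
  by code_simp+

lemma G23_row_weights: "map weight G23 = pd_seq23"
  by code_simp

lemma G23_even_tail: "\<forall>r\<in>set (drop 1 G23). length r = 23 \<and> \<not> dot_F2 (replicate 23 True) r"
  by code_simp

lemma H23_parity_check:
  "\<forall>r\<in>set (drop 6 G23). length r = 23 \<and> (\<forall>h\<in>set H23. \<not> dot_F2 h r)"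
  "\<forall>h\<in>set H23. length h = 23" "replicate 23 True \<in> set H23"
  by code_simp+

lemma H23_distinct_columns: "\<forall>a<23. \<forall>b<23. a \<noteq> b \<longrightarrow> (\<exists>h\<in>set H23. h ! a \<noteq> h ! b)"
proof -
  have "\<forall>a\<in>set [0..<23]. \<forall>b\<in>set [0..<23]. a \<noteq> b \<longrightarrow> (\<exists>h\<in>set H23. h ! a \<noteq> h ! b)"
    by code_simp
  then show ?thesis by simp
qed

lemma G23_short_tails:
  "all_sums_heavy 8 (drop 12 G23) (replicate 23 False) False"
  "all_sums_heavy 12 (drop 19 G23) (replicate 23 False) False"
  "all_sums_heavy 16 (drop 22 G23) (replicate 23 False) False"
  by code_simp+

definition block_dist :: "nat \<Rightarrow> nat" where
  "block_dist i = (if i < 1 then 1 else if i < 6 then 2 else if i < 12 then 4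
                   else if i < 19 then 8 else if i < 22 then 12 else 16)"

lemma pd_seq23_block_dist: "i < 23 \<Longrightarrow> pd_seq23 ! i = block_dist i"
proof -
  have "\<forall>i\<in>set [0..<23]. pd_seq23 ! i = block_dist i" by code_simp
  then show "i < 23 \<Longrightarrow> pd_seq23 ! i = block_dist i" by simp
qed

lemma G23_tail_dist:
  "dist_ge 23 1 (drop 0 G23)" "dist_ge 23 2 (drop 1 G23)" "dist_ge 23 4 (drop 6 G23)"
  "dist_ge 23 8 (drop 12 G23)" "dist_ge 23 12 (drop 19 G23)" "dist_ge 23 16 (drop 22 G23)"
proof -
  note independent = dist_ge_1_invertible[OF G23_square G23_inverse(1)]
  have rows: "\<forall>r\<in>set (drop s G23). length r = 23" for s
    using G23_square(1) by (auto simp: square_def dest: in_set_dropD)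
  show "dist_ge 23 1 (drop 0 G23)" by (rule independent)
  show "dist_ge 23 2 (drop 1 G23)" by (rule dist_ge_2_even[OF independent G23_even_tail])
  show "dist_ge 23 4 (drop 6 G23)"
    by (rule dist_ge_4_parity_check[OF independent H23_parity_check H23_distinct_columns])
  show "dist_ge 23 8 (drop 12 G23)" "dist_ge 23 12 (drop 19 G23)" "dist_ge 23 16 (drop 22 G23)"
    using G23_short_tails rows by (simp_all add: dist_ge_by_enumeration)
qed

lemma G23_coset_weight:
  assumes i: "i < 23" and z: "length z = 22 - i"
  shows "pd_seq23 ! i \<le> weight (lin_comb 23 (drop i G23) (True # z))"
proof -
  have len: "length G23 = 23" using G23_square(1) by (simp add: square_def)
  have tail: "d \<le> weight (lin_comb 23 (drop i G23) (True # z))"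
    if "dist_ge 23 d (drop s G23)" "s \<le> i" for d s
    using that i z len by (intro dist_ge_coset) auto
  consider "i < 1" | "1 \<le> i" "i < 6" | "6 \<le> i" "i < 12" | "12 \<le> i" "i < 19"
    | "19 \<le> i" "i < 22" | "22 \<le> i" by linarith
  then show ?thesis
    by cases (use i tail G23_tail_dist in \<open>auto simp: pd_seq23_block_dist block_dist_def\<close>)
qed

lemma G23_partial_dist:
  assumes "i < 23"
  shows "partial_dist 23 (lin_kernel 23 (mat_of_rows G23)) i = pd_seq23 ! i"
proof (rule partial_dist_lin_kernel_eqI[OF G23_square(1) assms])
  show "pd_seq23 ! i \<le> weight (lin_comb 23 (drop i G23) (True # z))" if "length z = 23 - i - 1" for z
    using G23_coset_weight assms that by simp
  show "weight (G23 ! i) = pd_seq23 ! i"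
    using assms G23_square(1) G23_row_weights by (metis nth_map square_def)
qed

theorem mainTheorem14:
  shows "(\<exists>G. invertible_F2 23 G \<and>
            (\<forall>i<23. partial_dist 23 (lin_kernel 23 G) i = pd_seq23 ! i))
         \<and> E_max 23 \<ge> (1 / 23) * (\<Sum>i<23. log 23 (real (pd_seq23 ! i)))"
proof
  show "\<exists>G. invertible_F2 23 G \<and> (\<forall>i<23. partial_dist 23 (lin_kernel 23 G) i = pd_seq23 ! i)"
    using invertible_mat_of_rows[OF G23_square G23_inverse] G23_partial_dist by blast
  have "(1 / 23) * (\<Sum>i<23. log 23 (real (pd_seq23 ! i))) =
        kernel_exponent 23 (lin_kernel 23 (mat_of_rows G23))"
    unfolding kernel_exponent_def by (simp add: G23_partial_dist)
  also have "\<dots> \<le> E_max 23"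
    by (rule kernel_exponent_le_E_max[OF is_kernel_lin_kernel[OF G23_square G23_inverse]])
  finally show "E_max 23 \<ge> (1 / 23) * (\<Sum>i<23. log 23 (real (pd_seq23 ! i)))" .
qed

end
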